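(* Let $k\ge1$ and let $X\in GL(2k,\mathbb F_2)$ be the permutation matrix of a product of disjoint transpositions of $[2k]$, each transposition exchanging an index in $\{1,\dots,k\}$ with an index in $\{k+1,\dots,2k\}$. Then $X$ is a product of matrices each of which is either an in-block factor $\mathrm{diag}(C_1,C_2)$ with $C_1,C_2\in GL(k,\mathbb F_2)$, or the codeblock exchange $\begin{pmatrix}0&I_k\\ I_k&0\end{pmatrix}$, or one of the transversal factors $\begin{pmatrix}I_k&I_k\\0&I_k\end{pmatrix}$, $\begin{pmatrix}I_k&0\\ I_k&I_k\end{pmatrix}$, with at most four transversal factors in total.
   Context: Setting: two codeblocks of a CSS code each encoding $k$ logical qubits; logical qubit $j$ of block $1$ has index $j$ and of block $2$ has index $k+j$. A logical CNOT/SWAP circuit is described by its action on $X$-type logical operators, a matrix in $GL(2k,\mathbb F_2)$, and composition is matrix multiplication. In-block factors and the codeblock exchange (relabelling of the two codeblocks) have zero physical cost; each transversal factor has physical depth one. *)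

theory Defs
  imports "HOL-Library.Z2" "Jordan_Normal_Form.Matrix"
begin

text \<open>Matrices over F_2 are Jordan_Normal_Form matrices over the field bit.
  Indices are 0-based: block 1 is {0..<k}, block 2 is {k..<2k}.\<close>

definition perm_matrix :: "nat \<Rightarrow> (nat \<Rightarrow> nat) \<Rightarrow> bit mat" where
  "perm_matrix n \<sigma> = mat n n (\<lambda>(i, j). if i = \<sigma> j then 1 else 0)"

text \<open>A permutation of {0..<2k} that is a product of disjoint transpositions,
  each exchanging an index of block 1 with an index of block 2:
  an involution all of whose non-fixed points are moved across the blocks.\<close>
definition cross_transposition_product :: "nat \<Rightarrow> (nat \<Rightarrow> nat) \<Rightarrow> bool" where
  "cross_transposition_product k \<sigma> \<longleftrightarrow>
     \<sigma> permutes {..<2*k} \<and>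
     (\<forall>i<2*k. \<sigma> (\<sigma> i) = i) \<and>
     (\<forall>i<2*k. \<sigma> i \<noteq> i \<longrightarrow> (i < k \<longleftrightarrow> k \<le> \<sigma> i))"

definition in_block_factors :: "nat \<Rightarrow> bit mat set" where
  "in_block_factors k = {four_block_mat C1 (0\<^sub>m k k) (0\<^sub>m k k) C2 | C1 C2.
      C1 \<in> carrier_mat k k \<and> C2 \<in> carrier_mat k k \<and> invertible_mat C1 \<and> invertible_mat C2}"

definition block_exchange :: "nat \<Rightarrow> bit mat" where
  "block_exchange k = four_block_mat (0\<^sub>m k k) (1\<^sub>m k) (1\<^sub>m k) (0\<^sub>m k k)"

definition transversal_upper :: "nat \<Rightarrow> bit mat" where
  "transversal_upper k = four_block_mat (1\<^sub>m k) (1\<^sub>m k) (0\<^sub>m k k) (1\<^sub>m k)"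

definition transversal_lower :: "nat \<Rightarrow> bit mat" where
  "transversal_lower k = four_block_mat (1\<^sub>m k) (0\<^sub>m k k) (1\<^sub>m k) (1\<^sub>m k)"

definition transversal_factors :: "nat \<Rightarrow> bit mat set" where
  "transversal_factors k = {transversal_upper k, transversal_lower k}"

definition allowed_factors :: "nat \<Rightarrow> bit mat set" where
  "allowed_factors k = in_block_factors k \<union> {block_exchange k} \<union> transversal_factors k"

definition mat_list_prod :: "nat \<Rightarrow> bit mat list \<Rightarrow> bit mat" where
  "mat_list_prod n Ms = foldr (*) Ms (1\<^sub>m n)"

end

theory Submission
  imports Defs "Jordan_Normal_Form.Determinant"
begin

text \<open>Conjugating by an in-block permutation of the second codeblock, we may assume that \<open>\<sigma>\<close>
  exchanges \<open>i\<close> with \<open>k + i\<close> for \<open>i\<close> in a set \<open>S\<close> and fixes everything else. If \<open>E\<close> is the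
  diagonal projection onto \<open>S\<close>, its matrix is \<open>[[I+E, E], [E, I+E]] = U L(E) U\<close> in characteristic 2,
  where \<open>U\<close> is the upper transversal factor and \<open>L(B) = [[I, 0], [B, I]]\<close>. If \<open>S\<close> is everything,
  the matrix is the codeblock exchange. Otherwise \<open>L(E) = L(C) L(C + E)\<close> for the cyclic shift \<open>C\<close>;
  both \<open>C\<close> and \<open>C + E\<close> are invertible, because a kernel vector of \<open>C + E\<close> is constant along
  the cycle and vanishes at an index outside \<open>S\<close>. Finally \<open>L(B)\<close> for invertible \<open>B\<close> is the lower
  transversal factor conjugated by \<open>diag(I, B)\<close>, so four transversal factors suffice.\<close>

lemma perm_matrix_carrier [simp]: "perm_matrix n f \<in> carrier_mat n n"
  and perm_matrix_dim [simp]: "dim_row (perm_matrix n f) = n" "dim_col (perm_matrix n f) = n"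
  by (simp_all add: perm_matrix_def)

lemma perm_matrix_index [simp]:
  "i < n \<Longrightarrow> j < n \<Longrightarrow> perm_matrix n f $$ (i, j) = (if i = f j then 1 else 0)"
  by (simp add: perm_matrix_def)

lemma perm_matrix_id: "perm_matrix n id = 1\<^sub>m n"
  by (rule eq_matI) auto

lemma perm_matrix_mult:
  assumes "\<And>j. j < n \<Longrightarrow> g j < n"
  shows "perm_matrix n f * perm_matrix n g = perm_matrix n (f \<circ> g)"
proof (rule eq_matI)
  fix i j assume "i < dim_row (perm_matrix n (f \<circ> g))" "j < dim_col (perm_matrix n (f \<circ> g))"
  then have ij: "i < n" "j < n" by simp_all
  have "(perm_matrix n f * perm_matrix n g) $$ (i, j)
      = (\<Sum>l<n. (if i = f l then 1 else 0) * (if l = g j then 1 else 0))"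
    using ij by (simp add: scalar_prod_def lessThan_atLeast0)
  also have "\<dots> = (\<Sum>l<n. if l = g j then (if i = f l then 1 else 0) else 0)"
    by (rule sum.cong) auto
  also have "\<dots> = perm_matrix n (f \<circ> g) $$ (i, j)"
    using ij assms by simp
  finally show "(perm_matrix n f * perm_matrix n g) $$ (i, j) = perm_matrix n (f \<circ> g) $$ (i, j)" .
qed simp_all

lemma invertible_perm_matrix:
  assumes "f permutes {..<n}"
  shows "invertible_mat (perm_matrix n f)"
proof -
  have maps: "h j < n" if "h permutes {..<n}" "j < n" for h j
    using permutes_in_image[OF that(1)] that(2) by simp
  have "perm_matrix n f * perm_matrix n (Hilbert_Choice.inv f) = 1\<^sub>m n"
    "perm_matrix n (Hilbert_Choice.inv f) * perm_matrix n f = 1\<^sub>m n"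
    using assms permutes_inv[OF assms]
    by (simp_all add: perm_matrix_mult maps permutes_inv_o perm_matrix_id)
  then show ?thesis
    unfolding invertible_mat_def inverts_mat_def square_mat.simps by auto
qed

lemma perm_matrix_mult_vec_index:
  assumes "inj_on f {..<n}" "j < n" "f j < n" "v \<in> carrier_vec n"
  shows "(perm_matrix n f *\<^sub>v v) $ f j = v $ j"
proof -
  have "(perm_matrix n f *\<^sub>v v) $ f j = (\<Sum>l<n. (if f j = f l then 1 else 0) * v $ l)"
    using assms by (simp add: scalar_prod_def lessThan_atLeast0)
  also have "\<dots> = (\<Sum>l<n. if l = j then v $ l else 0)"
    using assms(1,2) by (intro sum.cong) (auto dest: inj_onD)
  finally show ?thesis using assms(2) by simp
qed

lemma invertible_one_mat: "invertible_mat (1\<^sub>m n :: 'a :: semiring_1 mat)"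
  unfolding invertible_mat_def inverts_mat_def by (auto intro!: exI[of _ "1\<^sub>m n"])

lemma invertible_mat_obtain_inverse:
  assumes "A \<in> carrier_mat n n" "invertible_mat A"
  obtains B where "B \<in> carrier_mat n n" "A * B = 1\<^sub>m n" "invertible_mat (B :: 'a :: semiring_1 mat)"
proof -
  from assms obtain B where B: "A * B = 1\<^sub>m n" "B * A = 1\<^sub>m (dim_row B)"
    unfolding invertible_mat_def inverts_mat_def by auto
  then have "B \<in> carrier_mat n n"
    using assms(1) by (metis carrier_matD carrier_matI index_mult_mat(2,3) index_one_mat(2,3))
  with B assms(1) show ?thesis
    by (intro that) (auto simp: invertible_mat_def inverts_mat_def)
qed

lemma invertible_mat_if_trivial_kernel:
  fixes A :: "'a :: field mat"
  assumes A: "A \<in> carrier_mat n n"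
    and kernel: "\<And>v. v \<in> carrier_vec n \<Longrightarrow> A *\<^sub>v v = 0\<^sub>v n \<Longrightarrow> v = 0\<^sub>v n"
  shows "invertible_mat A"
proof -
  have "det A \<noteq> 0"
    using kernel unfolding det_0_iff_vec_prod_zero[OF A] by auto
  then obtain B where "B \<in> carrier_mat n n" "A * B = 1\<^sub>m n" "B * A = 1\<^sub>m n"
    using det_non_zero_imp_unit[OF A, of "()"] by (auto simp: Units_def ring_mat_def)
  then show ?thesis
    using A unfolding invertible_mat_def inverts_mat_def square_mat.simps by auto
qed

definition block_diag :: "nat \<Rightarrow> 'a :: zero mat \<Rightarrow> 'a mat \<Rightarrow> 'a mat" where
  "block_diag k C1 C2 = four_block_mat C1 (0\<^sub>m k k) (0\<^sub>m k k) C2"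

definition lower_transvection :: "nat \<Rightarrow> 'a :: semiring_1 mat \<Rightarrow> 'a mat" where
  "lower_transvection k B = four_block_mat (1\<^sub>m k) (0\<^sub>m k k) B (1\<^sub>m k)"

lemma mult_four_block_mat_square:
  assumes "A \<in> carrier_mat k k" "B \<in> carrier_mat k k" "C \<in> carrier_mat k k" "D \<in> carrier_mat k k"
    "A' \<in> carrier_mat k k" "B' \<in> carrier_mat k k" "C' \<in> carrier_mat k k" "D' \<in> carrier_mat k k"
  shows "four_block_mat A B C D * four_block_mat A' B' C' D'
    = four_block_mat (A * A' + B * C') (A * B' + B * D') (C * A' + D * C') (C * B' + D * D')"
  by (rule mult_four_block_mat) (use assms in auto)

lemma lower_transvection_mult:
  assumes "A \<in> carrier_mat k k" "B \<in> carrier_mat k k"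
  shows "lower_transvection k A * lower_transvection k B = lower_transvection k (A + B)"
  unfolding lower_transvection_def
  using assms by (simp add: mult_four_block_mat_square[where k = k])

lemma block_diag_conj_transversal_lower:
  assumes "B \<in> carrier_mat k k" "B' \<in> carrier_mat k k" "B * B' = 1\<^sub>m k"
  shows "block_diag k (1\<^sub>m k) B * (transversal_lower k * block_diag k (1\<^sub>m k) B')
    = lower_transvection k B"
  unfolding block_diag_def transversal_lower_def lower_transvection_def
  using assms by (simp add: mult_four_block_mat_square[where k = k])

lemma transversal_upper_lower_upper:
  assumes E: "(E :: bit mat) \<in> carrier_mat k k" "E * E = E"
  shows "transversal_upper k * (lower_transvection k E * transversal_upper k)
    = four_block_mat (1\<^sub>m k + E) E E (1\<^sub>m k + E)"
proof -
  have "1\<^sub>m k + (E + 1\<^sub>m k) = E" "E + 1\<^sub>m k = 1\<^sub>m k + E"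
    using E by (auto intro!: eq_matI simp: add.commute)
  then show ?thesis
    unfolding transversal_upper_def lower_transvection_def
    using E by (simp add: mult_four_block_mat_square[where k = k])
qed

lemma mat_list_prod_carrier:
  "set Ms \<subseteq> carrier_mat n n \<Longrightarrow> mat_list_prod n Ms \<in> carrier_mat n n"
  unfolding mat_list_prod_def by (induction Ms) auto

lemma mat_list_prod_append:
  assumes "set Ms \<subseteq> carrier_mat n n" "set Ns \<subseteq> carrier_mat n n"
  shows "mat_list_prod n (Ms @ Ns) = mat_list_prod n Ms * mat_list_prod n Ns"
  using assms(1)
proof (induction Ms)
  case Nil
  then show ?case
    using mat_list_prod_carrier[OF assms(2)] by (simp add: mat_list_prod_def)
next
  case (Cons M Ms)
  then show ?case
    using mat_list_prod_carrier[OF assms(2)] mat_list_prod_carrier[of Ms n]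
    by (simp add: mat_list_prod_def assoc_mult_mat[of M n n _ n _ n])
qed

lemma allowed_factors_carrier: "M \<in> allowed_factors k \<Longrightarrow> M \<in> carrier_mat (2*k) (2*k)"
  by (auto simp: allowed_factors_def in_block_factors_def block_exchange_def
      transversal_factors_def transversal_upper_def transversal_lower_def)

definition realizable :: "nat \<Rightarrow> nat \<Rightarrow> bit mat \<Rightarrow> bool" where
  "realizable k n M \<longleftrightarrow> (\<exists>Ms. set Ms \<subseteq> allowed_factors k \<and>
     length (filter (\<lambda>M. M \<in> transversal_factors k) Ms) \<le> n \<and> M = mat_list_prod (2*k) Ms)"

lemma realizable_mono: "realizable k m M \<Longrightarrow> m \<le> n \<Longrightarrow> realizable k n M"
  unfolding realizable_def by auto

lemma realizable_mult:
  assumes "realizable k m A" "realizable k n B"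
  shows "realizable k (m + n) (A * B)"
proof -
  obtain Ms Ns where Ms: "set Ms \<subseteq> allowed_factors k"
      "length (filter (\<lambda>M. M \<in> transversal_factors k) Ms) \<le> m" "A = mat_list_prod (2*k) Ms"
    and Ns: "set Ns \<subseteq> allowed_factors k"
      "length (filter (\<lambda>M. M \<in> transversal_factors k) Ns) \<le> n" "B = mat_list_prod (2*k) Ns"
    using assms unfolding realizable_def by blast
  have "A * B = mat_list_prod (2*k) (Ms @ Ns)"
    using Ms Ns allowed_factors_carrier by (subst mat_list_prod_append) auto
  with Ms Ns show ?thesis
    unfolding realizable_def by (intro exI[of _ "Ms @ Ns"]) auto
qed

lemma realizable_factor:
  assumes "M \<in> allowed_factors k"
  shows "realizable k (if M \<in> transversal_factors k then 1 else 0) M"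
  using assms allowed_factors_carrier[OF assms] unfolding realizable_def
  by (intro exI[of _ "[M]"]) (simp add: mat_list_prod_def)

lemma realizable_block_diag:
  assumes "1 \<le> k" "C1 \<in> carrier_mat k k" "C2 \<in> carrier_mat k k" "invertible_mat C1" "invertible_mat C2"
  shows "realizable k 0 (block_diag k C1 C2)"
proof -
  have "block_diag k C1 C2 $$ (0, k) \<noteq> transversal_upper k $$ (0, k)"
    "block_diag k C1 C2 $$ (k, 0) \<noteq> transversal_lower k $$ (k, 0)"
    using assms unfolding block_diag_def transversal_upper_def transversal_lower_def by auto
  then have "block_diag k C1 C2 \<notin> transversal_factors k"
    unfolding transversal_factors_def by auto
  moreover have "block_diag k C1 C2 \<in> allowed_factors k"
    using assms unfolding allowed_factors_def in_block_factors_def block_diag_def by blast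
  ultimately show ?thesis
    using realizable_factor by fastforce
qed

lemma realizable_block_exchange:
  assumes "1 \<le> k"
  shows "realizable k 0 (block_exchange k)"
proof -
  have "block_exchange k $$ (0, 0) \<noteq> transversal_upper k $$ (0, 0)"
    "block_exchange k $$ (0, 0) \<noteq> transversal_lower k $$ (0, 0)"
    using assms unfolding block_exchange_def transversal_upper_def transversal_lower_def by auto
  then have "block_exchange k \<notin> transversal_factors k"
    unfolding transversal_factors_def by auto
  then show ?thesis
    using realizable_factor[of "block_exchange k" k] by (simp add: allowed_factors_def)
qed

lemma realizable_transversal: "realizable k 1 (transversal_upper k)" "realizable k 1 (transversal_lower k)"
  using realizable_factor[of "transversal_upper k" k] realizable_factor[of "transversal_lower k" k]
  by (simp_all add: allowed_factors_def transversal_factors_def)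

lemma realizable_lower_transvection:
  assumes "1 \<le> k" "B \<in> carrier_mat k k" "invertible_mat B"
  shows "realizable k 1 (lower_transvection k B)"
proof -
  obtain B' where B': "B' \<in> carrier_mat k k" "B * B' = 1\<^sub>m k" "invertible_mat B'"
    using invertible_mat_obtain_inverse[OF assms(2,3)] .
  have "realizable k (0 + (1 + 0)) (block_diag k (1\<^sub>m k) B * (transversal_lower k * block_diag k (1\<^sub>m k) B'))"
    using assms B' invertible_one_mat
    by (intro realizable_mult realizable_block_diag realizable_transversal) auto
  then show ?thesis
    using block_diag_conj_transversal_lower[OF assms(2) B'(1,2)] by simp
qed

definition diag_projection :: "nat \<Rightarrow> nat set \<Rightarrow> bit mat" where
  "diag_projection k S = mat_diag k (\<lambda>i. of_bool (i \<in> S))"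

lemma diag_projection_carrier [simp]: "diag_projection k S \<in> carrier_mat k k"
  and diag_projection_dim [simp]: "dim_row (diag_projection k S) = k" "dim_col (diag_projection k S) = k"
  by (simp_all add: diag_projection_def mat_diag_def)

lemma diag_projection_idem: "diag_projection k S * diag_projection k S = diag_projection k S"
  by (simp add: diag_projection_def)

lemma diag_projection_mult_vec_index:
  assumes "v \<in> carrier_vec k" "i < k"
  shows "(diag_projection k S *\<^sub>v v) $ i = of_bool (i \<in> S) * v $ i"
proof -
  have "(diag_projection k S *\<^sub>v v) $ i = (\<Sum>l<k. (if i = l then of_bool (l \<in> S) else 0) * v $ l)"
    using assms by (simp add: diag_projection_def mat_diag_def scalar_prod_def lessThan_atLeast0)
  also have "\<dots> = (\<Sum>l<k. if l = i then of_bool (l \<in> S) * v $ l else 0)"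
    by (rule sum.cong) auto
  finally show ?thesis using assms(2) by simp
qed

definition cyclic_shift :: "nat \<Rightarrow> nat \<Rightarrow> nat" where
  "cyclic_shift k i = (if i < k then Suc i mod k else i)"

lemma cyclic_shift_permutes: "cyclic_shift k permutes {..<k}"
proof (rule bij_imp_permutes)
  have "inj_on (cyclic_shift k) {..<k}"
    by (rule inj_onI) (auto simp: cyclic_shift_def mod_if split: if_splits)
  moreover have "cyclic_shift k ` {..<k} \<subseteq> {..<k}"
    by (auto simp: cyclic_shift_def)
  ultimately show "bij_betw (cyclic_shift k) {..<k} {..<k}"
    by (simp add: bij_betw_def endo_inj_surj)
qed (simp add: cyclic_shift_def)

lemma cyclic_shift_orbit:
  assumes "j < k" "j \<in> A" "\<And>x. x < k \<Longrightarrow> x \<in> A \<Longrightarrow> cyclic_shift k x \<in> A" "i < k"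
  shows "i \<in> A"
proof -
  have "(j + m) mod k \<in> A" for m
  proof (induction m)
    case (Suc m)
    have "cyclic_shift k ((j + m) mod k) = (j + Suc m) mod k"
      using assms(1) by (simp add: cyclic_shift_def mod_Suc_eq)
    then show ?case
      using assms(1,3) Suc by (metis mod_less_divisor not_gr_zero not_less_zero)
  qed (use assms(1,2) in simp)
  from this[of "i + k - j"] show ?thesis
    using assms(1,4) by simp
qed

lemma invertible_cyclic_shift_add_diag_projection:
  assumes "t < k" "t \<notin> S"
  shows "invertible_mat (perm_matrix k (cyclic_shift k) + diag_projection k S)"
proof (rule invertible_mat_if_trivial_kernel)
  let ?c = "cyclic_shift k"
  show "perm_matrix k ?c + diag_projection k S \<in> carrier_mat k k" by simp
  fix v :: "bit vec"
  assume v: "v \<in> carrier_vec k" and kernel: "(perm_matrix k ?c + diag_projection k S) *\<^sub>v v = 0\<^sub>v k"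
  have c_less: "?c x < k" if "x < k" for x
    using that by (simp add: cyclic_shift_def)
  have propagate: "?c x \<in> S \<and> v $ ?c x = v $ x" if x: "x < k" "v $ x \<noteq> 0" for x
  proof -
    have "0 = ((perm_matrix k ?c + diag_projection k S) *\<^sub>v v) $ ?c x"
      using kernel c_less[OF x(1)] by simp
    also have "\<dots> = (perm_matrix k ?c *\<^sub>v v) $ ?c x + (diag_projection k S *\<^sub>v v) $ ?c x"
      using v c_less[OF x(1)]
      by (subst add_mult_distrib_mat_vec[of _ k k]) (auto simp del: index_mult_mat_vec)
    also have "\<dots> = v $ x + of_bool (?c x \<in> S) * v $ ?c x"
      using v x c_less[OF x(1)] permutes_inj_on[OF cyclic_shift_permutes]
      by (simp del: index_mult_mat_vec add: perm_matrix_mult_vec_index diag_projection_mult_vec_index)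
    finally show ?thesis
      using x(2) by (cases "v $ x"; cases "v $ ?c x") (auto split: if_splits)
  qed
  obtain p where p: "p < k" "?c p = t"
    using permutes_surj[OF cyclic_shift_permutes] permutes_not_in[OF cyclic_shift_permutes] assms(1)
    by (metis lessThan_iff surjD)
  show "v = 0\<^sub>v k"
  proof (rule eq_vecI)
    fix j assume "j < dim_vec (0\<^sub>v k :: bit vec)"
    then have "j < k" by simp
    show "v $ j = 0\<^sub>v k $ j"
    proof (rule ccontr)
      assume "v $ j \<noteq> 0\<^sub>v k $ j"
      then have "v $ p \<noteq> 0"
        using cyclic_shift_orbit[of j k "{x. v $ x \<noteq> 0}" p] \<open>j < k\<close> p(1) propagate by auto
      then show False
        using propagate[OF p(1)] p(2) assms(2) by simp
    qed
  qed (use v in simp)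
qed

definition cross_swap :: "nat \<Rightarrow> nat set \<Rightarrow> nat \<Rightarrow> nat" where
  "cross_swap k S i =
     (if i < k \<and> i \<in> S then i + k else if k \<le> i \<and> i < 2*k \<and> i - k \<in> S then i - k else i)"

lemma perm_matrix_cross_swap:
  "perm_matrix (2*k) (cross_swap k S) = four_block_mat (1\<^sub>m k + diag_projection k S)
     (diag_projection k S) (diag_projection k S) (1\<^sub>m k + diag_projection k S)"
  (is "_ = ?B")
proof (rule eq_matI)
  fix i j
  assume "i < dim_row ?B" "j < dim_col ?B"
  then have "i < k + k" "j < k + k" by simp_all
  then show "perm_matrix (2*k) (cross_swap k S) $$ (i, j) = ?B $$ (i, j)"
    by (cases "i < k"; cases "j < k") (auto simp: cross_swap_def diag_projection_def mat_diag_def)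
qed simp_all

lemma realizable_cross_swap:
  assumes "1 \<le> k"
  shows "realizable k 4 (perm_matrix (2*k) (cross_swap k S))"
proof (cases "{..<k} \<subseteq> S")
  case True
  then have "diag_projection k S = 1\<^sub>m k"
    by (auto intro!: eq_matI simp: diag_projection_def mat_diag_def)
  then have "perm_matrix (2*k) (cross_swap k S) = block_exchange k"
    unfolding perm_matrix_cross_swap block_exchange_def
    by (auto intro!: cong_four_block_mat eq_matI)
  then show ?thesis
    using realizable_block_exchange[OF assms] realizable_mono by fastforce
next
  case False
  then obtain t where t: "t < k" "t \<notin> S" by auto
  let ?C = "perm_matrix k (cyclic_shift k)" and ?E = "diag_projection k S"
  have "?C + (?C + ?E) = ?E"
    by (auto intro!: eq_matI simp: add.assoc[symmetric])
  then have split: "lower_transvection k ?E = lower_transvection k ?C * lower_transvection k (?C + ?E)"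
    by (simp add: lower_transvection_mult)
  have "realizable k (1 + ((1 + 1) + 1))
      (transversal_upper k * ((lower_transvection k ?C * lower_transvection k (?C + ?E)) * transversal_upper k))"
    using assms invertible_perm_matrix[OF cyclic_shift_permutes]
      invertible_cyclic_shift_add_diag_projection[OF t]
    by (intro realizable_mult realizable_transversal realizable_lower_transvection) auto
  then show ?thesis
    unfolding perm_matrix_cross_swap split[symmetric]
    by (simp add: transversal_upper_lower_upper diag_projection_idem numeral_eq_Suc)
qed

lemma partial_injection_extends_to_permutation:
  assumes "finite A" "S \<subseteq> A" "inj_on f S" "f ` S \<subseteq> A"
  obtains \<tau> where "\<tau> permutes A" "\<And>x. x \<in> S \<Longrightarrow> \<tau> x = f x"
proof -
  have "card (A - S) = card (A - f ` S)"
    using assms by (simp add: card_Diff_subset card_image finite_subset)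
  then obtain g where g: "bij_betw g (A - S) (A - f ` S)"
    using finite_same_card_bij assms(1) by blast
  define \<tau> where "\<tau> x = (if x \<in> S then f x else if x \<in> A then g x else x)" for x
  have "bij_betw (\<lambda>x. if x \<in> S then f x else g x) (S \<union> (A - S)) (f ` S \<union> (A - f ` S))"
    using assms(3) g by (intro bij_betw_disjoint_Un) (auto simp: inj_on_imp_bij_betw)
  then have "bij_betw \<tau> A A"
    using assms(2,4) by (subst bij_betw_cong[where g = "\<lambda>x. if x \<in> S then f x else g x"])
      (auto simp: \<tau>_def Un_absorb1 Un_absorb2)
  then have "\<tau> permutes A"
    by (rule bij_imp_permutes) (use assms(2) in \<open>auto simp: \<tau>_def\<close>)
  then show ?thesis
    by (rule that) (simp add: \<tau>_def)
qed

definition block2_perm :: "nat \<Rightarrow> (nat \<Rightarrow> nat) \<Rightarrow> nat \<Rightarrow> nat" where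
  "block2_perm k \<tau> i = (if k \<le> i then k + \<tau> (i - k) else i)"

lemma perm_matrix_block2_perm:
  "perm_matrix (2*k) (block2_perm k \<tau>) = block_diag k (1\<^sub>m k) (perm_matrix k \<tau>)"
  by (rule eq_matI) (auto simp: block2_perm_def block_diag_def)

lemma block2_perm_less: "\<tau> permutes {..<k} \<Longrightarrow> i < 2*k \<Longrightarrow> block2_perm k \<tau> i < 2*k"
  using permutes_in_image[of \<tau> "{..<k}" "i - k"] by (auto simp: block2_perm_def)

lemma cross_swap_less: "i < 2*k \<Longrightarrow> cross_swap k S i < 2*k"
  by (auto simp: cross_swap_def)

lemma cross_transposition_product_eq_conj_cross_swap:
  assumes \<sigma>: "cross_transposition_product k \<sigma>"
    and \<tau>: "\<tau> permutes {..<k}" "\<And>i. i < k \<Longrightarrow> k \<le> \<sigma> i \<Longrightarrow> \<tau> i = \<sigma> i - k"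
  shows "\<sigma> = block2_perm k \<tau> \<circ> cross_swap k {i. i < k \<and> k \<le> \<sigma> i} \<circ> block2_perm k (Hilbert_Choice.inv \<tau>)"
    (is "_ = block2_perm k \<tau> \<circ> cross_swap k ?S \<circ> _")
proof
  have perm: "\<sigma> permutes {..<2*k}" and inv: "\<And>i. i < 2*k \<Longrightarrow> \<sigma> (\<sigma> i) = i"
    and cross: "\<And>i. i < 2*k \<Longrightarrow> \<sigma> i \<noteq> i \<Longrightarrow> i < k \<longleftrightarrow> k \<le> \<sigma> i"
    using \<sigma> unfolding cross_transposition_product_def by auto
  fix x
  consider (block1) "x < k" | (block2) "k \<le> x" "x < 2*k" | (outside) "2*k \<le> x"
    by linarith
  then show "\<sigma> x = (block2_perm k \<tau> \<circ> cross_swap k ?S \<circ> block2_perm k (Hilbert_Choice.inv \<tau>)) x"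
  proof cases
    case block1
    then show ?thesis
      using cross[of x] \<tau>(2)[of x] by (auto simp: block2_perm_def cross_swap_def)
  next
    case block2
    define m where "m = Hilbert_Choice.inv \<tau> (x - k)"
    have m: "m < k" "\<tau> m = x - k"
      using permutes_in_image[OF permutes_inv[OF \<tau>(1)], of "x - k"]
        permutes_inverses(1)[OF \<tau>(1)] block2
      by (auto simp: m_def)
    show ?thesis
    proof (cases "k \<le> \<sigma> m")
      case True
      then have "\<sigma> m = x"
        using m \<tau>(2)[of m] block2 by simp
      then have "\<sigma> x = m"
        using inv[of m] m(1) by simp
      then show ?thesis
        using m True block2 by (simp add: block2_perm_def cross_swap_def m_def)
    next
      case False
      have "\<sigma> x = x"
      proof (rule ccontr)
        assume "\<sigma> x \<noteq> x"
        then have "\<sigma> x < k" "k \<le> \<sigma> (\<sigma> x)" "\<tau> (\<sigma> x) = x - k"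
          using cross[of x] inv[of x] block2 \<tau>(2)[of "\<sigma> x"] by auto
        then show False
          using m False permutes_inj[OF \<tau>(1)] by (metis injD)
      qed
      then show ?thesis
        using m False block2 by (simp add: block2_perm_def cross_swap_def m_def)
    qed
  next
    case outside
    then show ?thesis
      using permutes_not_in[OF perm] permutes_not_in[OF \<tau>(1)]
        permutes_not_in[OF permutes_inv[OF \<tau>(1)]]
      by (simp add: block2_perm_def cross_swap_def)
  qed
qed

lemma cross_transposition_product_obtain_matching:
  assumes "cross_transposition_product k \<sigma>"
  obtains \<tau> where "\<tau> permutes {..<k}" "\<And>i. i < k \<Longrightarrow> k \<le> \<sigma> i \<Longrightarrow> \<tau> i = \<sigma> i - k"
proof -
  have perm: "\<sigma> permutes {..<2*k}"
    using assms unfolding cross_transposition_product_def by auto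
  let ?S = "{i. i < k \<and> k \<le> \<sigma> i}"
  have "inj_on (\<lambda>i. \<sigma> i - k) ?S"
    using permutes_inj[OF perm] by (auto simp: inj_on_def inj_def)
  moreover have "(\<lambda>i. \<sigma> i - k) ` ?S \<subseteq> {..<k}"
  proof
    fix y assume "y \<in> (\<lambda>i. \<sigma> i - k) ` ?S"
    then obtain i where "i < k" "y = \<sigma> i - k" by auto
    then show "y \<in> {..<k}"
      using permutes_in_image[OF perm, of i] by simp
  qed
  ultimately obtain \<tau> where "\<tau> permutes {..<k}" "\<And>i. i \<in> ?S \<Longrightarrow> \<tau> i = \<sigma> i - k"
    using partial_injection_extends_to_permutation[of "{..<k}" ?S "\<lambda>i. \<sigma> i - k"] by blast
  then show ?thesis
    using that by simp
qed

theorem mainTheorem2: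
  fixes k :: nat and \<sigma> :: "nat \<Rightarrow> nat"
  assumes "k \<ge> 1"
    and "cross_transposition_product k \<sigma>"
  shows "\<exists>Ms. set Ms \<subseteq> allowed_factors k \<and>
           length (filter (\<lambda>M. M \<in> transversal_factors k) Ms) \<le> 4 \<and>
           perm_matrix (2*k) \<sigma> = mat_list_prod (2*k) Ms"
proof -
  obtain \<tau> where \<tau>: "\<tau> permutes {..<k}" "\<And>i. i < k \<Longrightarrow> k \<le> \<sigma> i \<Longrightarrow> \<tau> i = \<sigma> i - k"
    using cross_transposition_product_obtain_matching[OF assms(2)] by blast
  define S where "S = {i. i < k \<and> k \<le> \<sigma> i}"
  have \<sigma>: "\<sigma> = block2_perm k \<tau> \<circ> cross_swap k S \<circ> block2_perm k (Hilbert_Choice.inv \<tau>)"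
    unfolding S_def by (rule cross_transposition_product_eq_conj_cross_swap[OF assms(2) \<tau>])
  let ?R = "perm_matrix (2*k) (block2_perm k \<tau>)"
    and ?R' = "perm_matrix (2*k) (block2_perm k (Hilbert_Choice.inv \<tau>))"
  have \<tau>': "Hilbert_Choice.inv \<tau> permutes {..<k}"
    using permutes_inv[OF \<tau>(1)] .
  have "perm_matrix (2*k) \<sigma> = ?R * perm_matrix (2*k) (cross_swap k S) * ?R'"
    unfolding \<sigma> using block2_perm_less[OF \<tau>'] cross_swap_less
    by (simp add: perm_matrix_mult)
  moreover have "realizable k (0 + 4 + 0) (?R * perm_matrix (2*k) (cross_swap k S) * ?R')"
    unfolding perm_matrix_block2_perm using assms(1) \<tau>(1) \<tau>'
    by (intro realizable_mult realizable_block_diag realizable_cross_swap invertible_perm_matrix)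
      (auto simp: invertible_one_mat)
  ultimately show ?thesis
    unfolding realizable_def by simp
qed

end
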